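(* Let $s$ and $t$ be fixed positive integers. Then for sufficiently large $n$, $$R(\mathcal{SD}_{s,t},Q_n)\le n+\frac{(2+o(1))\,n}{\log n},$$ where $o(1)$ denotes a quantity tending to $0$ as $n\to\infty$ (for fixed $s,t$).
   Context: A poset $P_2$ is an (induced) subposet of $P_1$ if $P_2\subseteq P_1$ and for all $X,Y\in P_2$, $X\le_{P_2}Y$ iff $X\le_{P_1}Y$; a copy of a poset $P$ in $P_1$ is an induced subposet isomorphic to $P$. The Boolean lattice $Q_n$ is the poset of all subsets of an $n$-element set ordered by inclusion. A blue/red coloring of a poset is a map from its elements to $\{\text{blue},\text{red}\}$. For posets $P_1,P_2$, the poset Ramsey number $R(P_1,P_2)$ is the smallest integer $N$ such that every blue/red coloring of $Q_N$ contains a copy of $P_1$ all of whose elements are blue or a copy of $P_2$ all of whose elements are red. A chain $C_t$ is a totally ordered poset on $t$ elements. The $(s,t)$-subdivided diamond $\mathcal{SD}_{s,t}$ is the poset obtained from two disjoint chains of lengths $s$ and $t$, whose elements are pairwise incomparable across the two chains, by adding one element smaller than all others and one element larger than all others. $\log$ is base $2$. *)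

theory Defs
  imports Complex_Main
begin

definition has_copy :: "'a set \<Rightarrow> ('a \<Rightarrow> 'a \<Rightarrow> bool) \<Rightarrow> 'b set \<Rightarrow> ('b \<Rightarrow> 'b \<Rightarrow> bool) \<Rightarrow> bool" where
  "has_copy A leA B leB \<longleftrightarrow>
     (\<exists>f. f ` A \<subseteq> B \<and> inj_on f A \<and> (\<forall>x\<in>A. \<forall>y\<in>A. leA x y \<longleftrightarrow> leB (f x) (f y)))"

definition Q :: "nat \<Rightarrow> nat set set" where
  "Q n = Pow {..<n}"

text \<open>A blue/red colouring of Q_N is a predicate c (c X = True means X is blue).
  ramsey_arrow says every colouring of Q_N has a blue copy of P1 or a red copy of P2.\<close>

definition ramsey_arrow :: "nat \<Rightarrow> 'a set \<Rightarrow> ('a \<Rightarrow> 'a \<Rightarrow> bool) \<Rightarrow> 'b set \<Rightarrow> ('b \<Rightarrow> 'b \<Rightarrow> bool) \<Rightarrow> bool" where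
  "ramsey_arrow N P1 le1 P2 le2 \<longleftrightarrow>
     (\<forall>c :: nat set \<Rightarrow> bool.
        has_copy P1 le1 {X \<in> Q N. c X} (\<subseteq>) \<or> has_copy P2 le2 {X \<in> Q N. \<not> c X} (\<subseteq>))"

definition poset_ramsey :: "'a set \<Rightarrow> ('a \<Rightarrow> 'a \<Rightarrow> bool) \<Rightarrow> 'b set \<Rightarrow> ('b \<Rightarrow> 'b \<Rightarrow> bool) \<Rightarrow> nat" where
  "poset_ramsey P1 le1 P2 le2 = (LEAST N. ramsey_arrow N P1 le1 P2 le2)"

text \<open>The (s,t)-subdivided diamond. Elements: (0,0) is the bottom, (3,0) the top,
  (1,i) for i<s form the first chain, (2,j) for j<t the second chain.\<close>

definition SD :: "nat \<Rightarrow> nat \<Rightarrow> (nat \<times> nat) set" where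
  "SD s t = {(0,0), (3,0)} \<union> {(1,i) | i. i < s} \<union> {(2,j) | j. j < t}"

definition SD_le :: "nat \<times> nat \<Rightarrow> nat \<times> nat \<Rightarrow> bool" where
  "SD_le x y \<longleftrightarrow> x = y \<or> x = (0,0) \<or> y = (3,0)
      \<or> (fst x = fst y \<and> fst x \<in> {1,2} \<and> snd x \<le> snd y)"

end

theory Submission
  imports Defs "HOL-Combinatorics.Permutations" "HOL-Real_Asymp.Real_Asymp"
begin

text \<open>Let N = n + d m with d = max s t, split the ground set into X = {..<n} and Y = {n..<N},
  and fix a colouring of Q N without a red copy of Q n. For every ordering \<pi> of Y there is then a
  blue chain Z 0 \<subseteq> \<dots> \<subseteq> Z |Y| with Z i - X = {\<pi> 0, \<dots>, \<pi> (i - 1)} and Z 0 \<subseteq> X: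
  otherwise the longest such chains below the subsets of X yield a red copy of Q n. Split Y into
  its d residue classes mod d and use the (m!)^d orderings that visit the classes cyclically, each
  class in an order of its own. Once (m!)^d > 4^n, two of them produce chains with the same bottom
  Z 0 and the same top Z |Y|. At the first position p where the two orderings differ, each one
  reaches the other's element only d or more steps later, so the chain segments just after p are
  incomparable and, with the common bottom and top, form SD s t. Since ln m! \<ge> m ln m - m, the
  least admissible m satisfies d m \<le> (2 + o(1)) n / log n.\<close>

definition blue_chain ::
    "(nat set \<Rightarrow> bool) \<Rightarrow> nat set \<Rightarrow> (nat \<Rightarrow> nat) \<Rightarrow> nat \<Rightarrow> nat set \<Rightarrow> (nat \<Rightarrow> nat set) \<Rightarrow> bool" where
  "blue_chain c X \<pi> j A Z \<longleftrightarrow>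
     (\<forall>i<j. c (Z i) \<and> Z i \<inter> X \<subseteq> A \<and> Z i - X = \<pi> ` {..<i}) \<and>
     (\<forall>i i'. i \<le> i' \<longrightarrow> i' < j \<longrightarrow> Z i \<subseteq> Z i')"

lemma blue_chain_mono: "blue_chain c X \<pi> j A Z \<Longrightarrow> A \<subseteq> B \<Longrightarrow> blue_chain c X \<pi> j B Z"
  unfolding blue_chain_def by blast

lemma blue_chain_snoc:
  assumes Z: "blue_chain c X \<pi> j A Z" and "A \<subseteq> X" and "\<pi> ` {..<j} \<inter> X = {}"
    and blue: "c (A \<union> \<pi> ` {..<j})"
  shows "blue_chain c X \<pi> (Suc j) A (Z(j := A \<union> \<pi> ` {..<j}))"
proof -
  have "Z i \<subseteq> A \<union> \<pi> ` {..<j}" if "i < j" for i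
  proof -
    have "Z i \<subseteq> (Z i \<inter> X) \<union> (Z i - X)" by blast
    also have "\<dots> \<subseteq> A \<union> \<pi> ` {..<j}" using Z that unfolding blue_chain_def by auto
    finally show ?thesis .
  qed
  then show ?thesis
    using assms unfolding blue_chain_def by (auto simp: less_Suc_eq le_less)
qed

text \<open>Take f A = \<pi>[<g A], where g A is the length of the longest blue chain below A (capped at k):
  if A \<union> f A were blue, it would extend such a chain.\<close>

lemma monotone_red_extension_of_no_blue_chain:
  assumes disj: "\<pi> ` {..<k} \<inter> X = {}" and no: "\<nexists>Z. blue_chain c X \<pi> (Suc k) X Z"
  obtains f where "\<And>A. A \<subseteq> X \<Longrightarrow> \<not> c (A \<union> f A)" "\<And>A. f A \<subseteq> \<pi> ` {..<k}"
    "\<And>A B. A \<subseteq> B \<Longrightarrow> f A \<subseteq> f B"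
proof -
  define g where "g A = (GREATEST j. j \<le> k \<and> (\<exists>Z. blue_chain c X \<pi> j A Z))" for A
  have "0 \<le> k \<and> (\<exists>Z. blue_chain c X \<pi> 0 A Z)" for A
    unfolding blue_chain_def by auto
  then have g: "g A \<le> k \<and> (\<exists>Z. blue_chain c X \<pi> (g A) A Z)" for A
    unfolding g_def by (rule GreatestI_nat) auto
  have g_ge: "j \<le> g A" if "j \<le> k" "blue_chain c X \<pi> j A Z" for j A Z
    unfolding g_def by (rule Greatest_le_nat[where b=k]) (use that in auto)
  have red: "\<not> c (A \<union> \<pi> ` {..<g A})" if "A \<subseteq> X" for A
  proof
    assume blue: "c (A \<union> \<pi> ` {..<g A})"
    obtain Z where "blue_chain c X \<pi> (g A) A Z" using g by blast
    moreover have "\<pi> ` {..<g A} \<subseteq> \<pi> ` {..<k}" using g[of A] by (intro image_mono) simp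
    then have "\<pi> ` {..<g A} \<inter> X = {}" using disj by blast
    ultimately have longer: "blue_chain c X \<pi> (Suc (g A)) A (Z(g A := A \<union> \<pi> ` {..<g A}))"
      using blue_chain_snoc that blue by blast
    show False
    proof (cases "g A < k")
      case True
      then show False using g_ge[OF _ longer] by simp
    next
      case False
      then have "g A = k" using g[of A] by simp
      then show False using no blue_chain_mono[OF longer that] by metis
    qed
  qed
  have "g A \<le> g B" if "A \<subseteq> B" for A B
  proof -
    from g[of A] obtain Z where "g A \<le> k" "blue_chain c X \<pi> (g A) A Z" by blast
    then show ?thesis using g_ge blue_chain_mono that by blast
  qed
  then have "\<pi> ` {..<g A} \<subseteq> \<pi> ` {..<g B}" if "A \<subseteq> B" for A B
    using that by (intro image_mono) simp
  moreover have "\<pi> ` {..<g A} \<subseteq> \<pi> ` {..<k}" for A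
    using g[of A] by (intro image_mono) simp
  ultimately show ?thesis
    using red that[of "\<lambda>A. \<pi> ` {..<g A}"] by blast
qed

lemma has_red_copy_of_monotone_extension:
  assumes red: "\<And>A. A \<subseteq> {..<n} \<Longrightarrow> \<not> c (A \<union> f A)"
    and range: "\<And>A. f A \<subseteq> {n..<N}" and mono: "\<And>A B. A \<subseteq> B \<Longrightarrow> f A \<subseteq> f B"
    and "n \<le> N"
  shows "has_copy (Q n) (\<subseteq>) {X \<in> Q N. \<not> c X} (\<subseteq>)"
  unfolding has_copy_def
proof (intro exI[of _ "\<lambda>A. A \<union> f A"] conjI ballI)
  have reflect: "A \<subseteq> B" if "A \<in> Q n" "A \<union> f A \<subseteq> B \<union> f B" for A B
    using that range[of B] unfolding Q_def by fastforce
  show "(\<lambda>A. A \<union> f A) ` Q n \<subseteq> {X \<in> Q N. \<not> c X}"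
    using red range \<open>n \<le> N\<close> unfolding Q_def by fastforce
  show "inj_on (\<lambda>A. A \<union> f A) (Q n)"
    by (rule inj_onI) (metis reflect order_refl subset_antisym)
  show "A \<subseteq> B \<longleftrightarrow> A \<union> f A \<subseteq> B \<union> f B" if "A \<in> Q n" "B \<in> Q n" for A B
    using that reflect mono by blast
qed

lemma blue_chain_exists:
  assumes no_red: "\<not> has_copy (Q n) (\<subseteq>) {X \<in> Q (n + k). \<not> c X} (\<subseteq>)"
    and \<pi>: "\<pi> ` {..<k} \<subseteq> {n..<n + k}"
  shows "\<exists>Z. blue_chain c {..<n} \<pi> (Suc k) {..<n} Z"
proof (rule ccontr)
  assume no_chain: "\<nexists>Z. blue_chain c {..<n} \<pi> (Suc k) {..<n} Z"
  have disj: "\<pi> ` {..<k} \<inter> {..<n} = {}" using \<pi> by auto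
  obtain f where red: "\<And>A. A \<subseteq> {..<n} \<Longrightarrow> \<not> c (A \<union> f A)"
    and range: "\<And>A. f A \<subseteq> \<pi> ` {..<k}" and mono: "\<And>A B. A \<subseteq> B \<Longrightarrow> f A \<subseteq> f B"
    using monotone_red_extension_of_no_blue_chain[OF disj no_chain] by blast
  have "has_copy (Q n) (\<subseteq>) {X \<in> Q (n + k). \<not> c X} (\<subseteq>)"
    by (rule has_red_copy_of_monotone_extension[of n c f])
       (use red mono subset_trans[OF range \<pi>] in auto)
  then show False using no_red by contradiction
qed

lemma blue_chain_mem_iff:
  assumes "blue_chain c X \<pi> (Suc k) A Z" "inj_on \<pi> {..<k}" "\<pi> ` {..<k} \<inter> X = {}"
    and "i \<le> k" "i' < k"
  shows "\<pi> i' \<in> Z i \<longleftrightarrow> i' < i"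
proof -
  have "Z i - X = \<pi> ` {..<i}" using assms(1,4) unfolding blue_chain_def by simp
  moreover have "\<pi> i' \<notin> X" using assms(3,5) by auto
  moreover have "\<pi> i' \<in> \<pi> ` {..<i} \<longleftrightarrow> i' < i"
    using assms(2,4,5) by (auto simp: inj_on_eq_iff)
  ultimately show ?thesis by blast
qed

lemma blue_chain_subset_iff:
  assumes "blue_chain c X \<pi> (Suc k) A Z" "inj_on \<pi> {..<k}" "\<pi> ` {..<k} \<inter> X = {}"
    and "i \<le> k" "i' \<le> k"
  shows "Z i \<subseteq> Z i' \<longleftrightarrow> i \<le> i'"
proof
  assume "Z i \<subseteq> Z i'"
  show "i \<le> i'"
  proof (rule ccontr)
    assume "\<not> i \<le> i'"
    then have "\<pi> i' \<in> Z i" "\<pi> i' \<notin> Z i'"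
      using blue_chain_mem_iff[OF assms(1-3)] assms(4,5) by auto
    then show False using \<open>Z i \<subseteq> Z i'\<close> by blast
  qed
next
  assume "i \<le> i'"
  then show "Z i \<subseteq> Z i'" using assms(1,5) unfolding blue_chain_def by simp
qed

lemma blue_chain_members:
  assumes "blue_chain c X \<pi> (Suc k) A Z" "i \<le> k"
  shows "c (Z i)" "Z i \<subseteq> X \<union> \<pi> ` {..<k}"
proof -
  have "c (Z i)" "Z i - X = \<pi> ` {..<i}" using assms unfolding blue_chain_def by simp_all
  moreover have "\<pi> ` {..<i} \<subseteq> \<pi> ` {..<k}" using assms(2) by (intro image_mono) simp
  ultimately show "c (Z i)" "Z i \<subseteq> X \<union> \<pi> ` {..<k}" by blast+
qed

lemma has_copy_subsetI:
  assumes "f ` A \<subseteq> B" and "\<And>x y. x \<in> A \<Longrightarrow> y \<in> A \<Longrightarrow> le x y \<longleftrightarrow> f x \<subseteq> f y"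
    and "\<And>x y. x \<in> A \<Longrightarrow> y \<in> A \<Longrightarrow> le x y \<Longrightarrow> le y x \<Longrightarrow> x = y"
  shows "has_copy A le B (\<subseteq>)"
  unfolding has_copy_def
  by (rule exI[of _ f]) (use assms in \<open>auto intro!: inj_onI\<close>)

lemma SD_cases:
  assumes "x \<in> SD s t"
  obtains "x = (0,0)" | "x = (3,0)" | i where "x = (1,i)" "i < s" | j where "x = (2,j)" "j < t"
  using assms unfolding SD_def by auto

lemma SD_le_antisym: "x \<in> SD s t \<Longrightarrow> y \<in> SD s t \<Longrightarrow> SD_le x y \<Longrightarrow> SD_le y x \<Longrightarrow> x = y"
  unfolding SD_def SD_le_def by auto

text \<open>The bottom, the top and the s elements of the first chain of SD s t (and likewise with the
  second chain) form a chain; we index it as 0 < p + 1 < \<dots> < p + s < k.\<close>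

definition SD_index :: "nat \<Rightarrow> nat \<Rightarrow> nat \<times> nat \<Rightarrow> nat" where
  "SD_index p k x = (if x = (0,0) then 0 else if x = (3,0) then k else p + 1 + snd x)"

lemma SD_le_iff_index:
  assumes "x \<in> SD s t" "y \<in> SD s t" "p + s < k" "p + t < k"
    and "fst x \<noteq> j" "fst y \<noteq> j" "j \<in> {1,2}"
  shows "SD_le x y \<longleftrightarrow> SD_index p k x \<le> SD_index p k y"
  using assms(3-7)
  by (cases rule: SD_cases[OF assms(1)]; cases rule: SD_cases[OF assms(2)])
     (auto simp: SD_le_def SD_index_def)

lemma SD_index_bounds:
  assumes "x \<in> SD s t" "p + s < k" "p + t < k"
  shows "SD_index p k x \<le> k" "fst x \<in> {1,2} \<Longrightarrow> p + 1 \<le> SD_index p k x"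
    "fst x = 1 \<Longrightarrow> SD_index p k x \<le> p + s" "fst x = 2 \<Longrightarrow> SD_index p k x \<le> p + t"
  using assms unfolding SD_def SD_index_def by auto

definition SD_embed ::
    "(nat \<Rightarrow> 'a set) \<Rightarrow> (nat \<Rightarrow> 'a set) \<Rightarrow> nat \<Rightarrow> nat \<Rightarrow> nat \<times> nat \<Rightarrow> 'a set" where
  "SD_embed Z W p k x = (if fst x = 2 then W else Z) (SD_index p k x)"

lemma SD_embed_eq:
  assumes "x \<in> SD s t" "Z 0 = W 0" "Z k = W k"
  shows "fst x \<noteq> 2 \<Longrightarrow> SD_embed Z W p k x = Z (SD_index p k x)"
    "fst x \<noteq> 1 \<Longrightarrow> SD_embed Z W p k x = W (SD_index p k x)"
  using assms unfolding SD_embed_def SD_def SD_index_def by auto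

lemma SD_embed_incomparable:
  assumes Z: "\<And>i i'. i \<le> k \<Longrightarrow> i' \<le> k \<Longrightarrow> Z i \<subseteq> Z i' \<longleftrightarrow> i \<le> i'"
    and W: "\<And>i i'. i \<le> k \<Longrightarrow> i' \<le> k \<Longrightarrow> W i \<subseteq> W i' \<longleftrightarrow> i \<le> i'"
    and ends: "Z 0 = W 0" "Z k = W k" and bounds: "p + s < k" "p + t < k"
    and a: "a \<in> Z (p + 1)" "a \<notin> W (p + t)" and b: "b \<in> W (p + 1)" "b \<notin> Z (p + s)"
    and x: "x \<in> SD s t" and y: "y \<in> SD s t" and sides: "{fst x, fst y} = {1, 2}"
  shows "\<not> SD_embed Z W p k x \<subseteq> SD_embed Z W p k y"
proof -
  note idx = SD_index_bounds[OF _ bounds] and F = SD_embed_eq[OF _ ends]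
  consider "fst x = 1" "fst y = 2" | "fst x = 2" "fst y = 1"
    using sides by (auto simp: doubleton_eq_iff)
  then show ?thesis
  proof cases
    case 1
    then have "a \<in> SD_embed Z W p k x" "a \<notin> SD_embed Z W p k y"
      using a Z[of "p + 1" "SD_index p k x"] W[of "SD_index p k y" "p + t"]
        idx[OF x] idx[OF y] F[OF x] F[OF y] bounds by auto
    then show ?thesis by blast
  next
    case 2
    then have "b \<in> SD_embed Z W p k x" "b \<notin> SD_embed Z W p k y"
      using b W[of "p + 1" "SD_index p k x"] Z[of "SD_index p k y" "p + s"]
        idx[OF x] idx[OF y] F[OF x] F[OF y] bounds by auto
    then show ?thesis by blast
  qed
qed

lemma has_copy_SD_of_chains:
  assumes Z: "\<And>i i'. i \<le> k \<Longrightarrow> i' \<le> k \<Longrightarrow> Z i \<subseteq> Z i' \<longleftrightarrow> i \<le> i'"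
    and W: "\<And>i i'. i \<le> k \<Longrightarrow> i' \<le> k \<Longrightarrow> W i \<subseteq> W i' \<longleftrightarrow> i \<le> i'"
    and ends: "Z 0 = W 0" "Z k = W k" and bounds: "p + s < k" "p + t < k"
    and a: "a \<in> Z (p + 1)" "a \<notin> W (p + t)" and b: "b \<in> W (p + 1)" "b \<notin> Z (p + s)"
    and S: "Z ` {..k} \<union> W ` {..k} \<subseteq> S"
  shows "has_copy (SD s t) SD_le S (\<subseteq>)"
proof (rule has_copy_subsetI[of "SD_embed Z W p k"])
  note idx = SD_index_bounds[OF _ bounds] and F = SD_embed_eq[OF _ ends]
  show "SD_embed Z W p k ` SD s t \<subseteq> S"
    using S idx(1) unfolding SD_embed_def by (auto simp: image_subset_iff)
  show "SD_le x y \<longleftrightarrow> SD_embed Z W p k x \<subseteq> SD_embed Z W p k y"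
    if "x \<in> SD s t" "y \<in> SD s t" for x y
  proof -
    consider "{fst x, fst y} = {1, 2}" | "fst x \<noteq> 2" "fst y \<noteq> 2" | "fst x \<noteq> 1" "fst y \<noteq> 1"
      by fastforce
    then show ?thesis
    proof cases
      case 1
      then show ?thesis
        using SD_embed_incomparable[OF Z W ends bounds a b that] that
        unfolding SD_le_def by auto
    next
      case 2
      then show ?thesis
        using SD_le_iff_index[OF that bounds, of 2] F[OF that(1)] F[OF that(2)] Z idx that by simp
    next
      case 3
      then show ?thesis
        using SD_le_iff_index[OF that bounds, of 1] F[OF that(1)] F[OF that(2)] W idx that by simp
    qed
  qed
qed (rule SD_le_antisym)

text \<open>The elements of {n..<n + d * m} are split into their d residue classes modulo d, each
  ordered by a permutation of {..<m}; position i visits class i mod d and takes the element of rank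
  g (i mod d) (i div d) there.\<close>

definition interleave :: "nat \<Rightarrow> nat \<Rightarrow> (nat \<Rightarrow> nat \<Rightarrow> nat) \<Rightarrow> nat \<Rightarrow> nat" where
  "interleave n d g i = n + d * g (i mod d) (i div d) + i mod d"

lemma interleave_mod_eq:
  assumes "interleave n d g i = interleave n d g' i'"
  shows "i mod d = i' mod d"
proof -
  have "(d * g (i mod d) (i div d) + i mod d) mod d
      = (d * g' (i' mod d) (i' div d) + i' mod d) mod d"
    using assms unfolding interleave_def by simp
  then show ?thesis by simp
qed

lemma bij_betw_interleave:
  assumes "d \<ge> 1" and g: "\<And>r. r < d \<Longrightarrow> g r permutes {..<m}"
  shows "bij_betw (interleave n d g) {..<d * m} {n..<n + d * m}"
proof -
  have inj: "inj_on (interleave n d g) {..<d * m}"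
  proof (rule inj_onI)
    fix i i' assume eq: "interleave n d g i = interleave n d g i'"
    then have r: "i mod d = i' mod d" by (rule interleave_mod_eq)
    with eq have "g (i mod d) (i div d) = g (i mod d) (i' div d)"
      using \<open>d \<ge> 1\<close> by (simp add: interleave_def)
    moreover have "inj (g (i mod d))" using \<open>d \<ge> 1\<close> by (intro permutes_inj[OF g]) simp
    ultimately have "i div d = i' div d" by (simp add: inj_eq)
    with r show "i = i'" by (metis div_mod_decomp)
  qed
  have "interleave n d g i \<in> {n..<n + d * m}" if "i < d * m" for i
  proof -
    have "i div d < m" using that by (simp add: less_mult_imp_div_less mult.commute)
    moreover have "g (i mod d) permutes {..<m}" using \<open>d \<ge> 1\<close> by (intro g) simp
    ultimately have "g (i mod d) (i div d) < m" by (metis lessThan_iff permutes_in_image)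
    then have "d * g (i mod d) (i div d) + d \<le> d * m"
      by (metis Suc_leI mult_Suc_right mult_le_mono2 add.commute)
    moreover have "i mod d < d" using \<open>d \<ge> 1\<close> by simp
    ultimately show ?thesis unfolding interleave_def by simp
  qed
  then have "interleave n d g ` {..<d * m} \<subseteq> {n..<n + d * m}" by blast
  then have "interleave n d g ` {..<d * m} = {n..<n + d * m}"
    by (rule card_subset_eq[rotated]) (simp_all add: card_image[OF inj])
  with inj show ?thesis by (rule bij_betw_imageI)
qed

lemma interleave_neq:
  assumes "g \<in> (\<Pi>\<^sub>E r\<in>{..<d}. {p. p permutes {..<m}})" "g' \<in> (\<Pi>\<^sub>E r\<in>{..<d}. {p. p permutes {..<m}})"
    and "g \<noteq> g'"
  shows "\<exists>i<d * m. interleave n d g i \<noteq> interleave n d g' i"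
proof -
  obtain r where r: "r < d" "g r \<noteq> g' r" using assms by (metis PiE_ext lessThan_iff)
  then obtain q where q: "g r q \<noteq> g' r q" by auto
  have "g r permutes {..<m}" "g' r permutes {..<m}" using assms r(1) by auto
  then have "q < m" using q permutes_not_in by (metis lessThan_iff)
  define i where "i = d * q + r"
  have "i mod d = r" "i div d = q" unfolding i_def using r(1) by auto
  then have "interleave n d g i \<noteq> interleave n d g' i" unfolding interleave_def using q r(1) by simp
  moreover have "i < d * m"
  proof -
    have "i < d * q + d" unfolding i_def using r(1) by simp
    also have "\<dots> \<le> d * m" using \<open>q < m\<close> by (metis Suc_leI mult_Suc_right mult_le_mono2 add.commute)
    finally show ?thesis .
  qed
  ultimately show ?thesis by blast
qed

lemma first_difference_far:
  fixes k p q d :: nat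
  assumes "inj_on \<pi> {..<k}" "p < k" "q < k" and prefix: "\<And>i. i < p \<Longrightarrow> \<pi> i = \<sigma> i"
    and "\<pi> p \<noteq> \<sigma> p" "\<sigma> q = \<pi> p" "q mod d = p mod d"
  shows "p + d \<le> q"
proof -
  have "\<not> q < p"
  proof
    assume "q < p"
    then have "\<pi> q = \<pi> p" using prefix assms(6) by simp
    then have "q = p" using assms(1-3) by (simp add: inj_on_eq_iff)
    with \<open>q < p\<close> show False by simp
  qed
  moreover have "q \<noteq> p" using assms(5,6) by auto
  ultimately have "p < q" by simp
  moreover from this have "d dvd q - p" using assms(7) mod_eq_dvd_iff_nat[of p q d] by simp
  ultimately show ?thesis by (auto dest: dvd_imp_le)
qed

lemma orderings_first_difference:
  fixes k d :: nat
  assumes \<pi>: "bij_betw \<pi> {..<k} Y" and \<sigma>: "bij_betw \<sigma> {..<k} Y"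
    and classes: "\<And>i i'. i < k \<Longrightarrow> i' < k \<Longrightarrow> \<pi> i = \<sigma> i' \<Longrightarrow> i mod d = i' mod d"
    and "\<exists>i<k. \<pi> i \<noteq> \<sigma> i"
  obtains p q r where "p < k" "q < k" "r < k" "\<sigma> q = \<pi> p" "\<pi> r = \<sigma> p" "p + d \<le> q" "p + d \<le> r"
proof -
  define p where "p = (LEAST i. \<pi> i \<noteq> \<sigma> i)"
  obtain i where i: "i < k" "\<pi> i \<noteq> \<sigma> i" using assms by blast
  have "\<pi> p \<noteq> \<sigma> p" unfolding p_def by (rule LeastI[of _ i]) (rule i(2))
  have "p < k" using Least_le[of _ i] i unfolding p_def by (meson order.strict_trans1)
  have prefix: "\<pi> j = \<sigma> j" if "j < p" for j
    using not_less_Least that unfolding p_def by blast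
  have inj: "inj_on \<pi> {..<k}" "inj_on \<sigma> {..<k}"
    using \<pi> \<sigma> by (auto dest: bij_betw_imp_inj_on)
  have "\<pi> p \<in> \<sigma> ` {..<k}" "\<sigma> p \<in> \<pi> ` {..<k}"
    using \<pi> \<sigma> \<open>p < k\<close> by (auto dest!: bij_betw_imp_surj_on)
  then obtain q r where q: "q < k" "\<sigma> q = \<pi> p" and r: "r < k" "\<pi> r = \<sigma> p" by auto
  have "p + d \<le> q"
    using first_difference_far[OF inj(1) \<open>p < k\<close> q(1) prefix \<open>\<pi> p \<noteq> \<sigma> p\<close> q(2)]
      classes[OF \<open>p < k\<close> q(1)] q(2) by simp
  moreover have "p + d \<le> r"
    using first_difference_far[OF inj(2) \<open>p < k\<close> r(1) prefix[symmetric] _ r(2)]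
      classes[OF r(1) \<open>p < k\<close>] r(2) \<open>\<pi> p \<noteq> \<sigma> p\<close> by simp
  ultimately show ?thesis using that \<open>p < k\<close> q r by blast
qed

lemma has_copy_SD_of_blue_chains:
  assumes "s \<le> d" "t \<le> d" and "X \<inter> Y = {}"
    and \<pi>: "bij_betw \<pi> {..<k} Y" and \<sigma>: "bij_betw \<sigma> {..<k} Y"
    and classes: "\<And>i i'. i < k \<Longrightarrow> i' < k \<Longrightarrow> \<pi> i = \<sigma> i' \<Longrightarrow> i mod d = i' mod d"
    and "\<exists>i<k. \<pi> i \<noteq> \<sigma> i"
    and Z: "blue_chain c X \<pi> (Suc k) X Z" and W: "blue_chain c X \<sigma> (Suc k) X W"
    and bottom: "Z 0 = W 0" and top: "Z k \<inter> X = W k \<inter> X"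
  shows "has_copy (SD s t) SD_le {A \<in> Pow (X \<union> Y). c A} (\<subseteq>)"
proof -
  obtain p q r where "p < k" and q: "q < k" "\<sigma> q = \<pi> p" and r: "r < k" "\<pi> r = \<sigma> p"
    and "p + d \<le> q" "p + d \<le> r"
    using orderings_first_difference[OF \<pi> \<sigma> classes \<open>\<exists>i<k. \<pi> i \<noteq> \<sigma> i\<close>] by blast
  then have bounds: "p + s < k" "p + t < k" using \<open>s \<le> d\<close> \<open>t \<le> d\<close> by linarith+
  have inj: "inj_on \<pi> {..<k}" "inj_on \<sigma> {..<k}"
    using \<pi> \<sigma> by (auto dest: bij_betw_imp_inj_on)
  have img: "\<pi> ` {..<k} = Y" "\<sigma> ` {..<k} = Y"
    using \<pi> \<sigma> by (auto dest: bij_betw_imp_surj_on)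
  have disj: "\<pi> ` {..<k} \<inter> X = {}" "\<sigma> ` {..<k} \<inter> X = {}" using img \<open>X \<inter> Y = {}\<close> by auto
  note Z_mem = blue_chain_mem_iff[OF Z inj(1) disj(1)]
  note W_mem = blue_chain_mem_iff[OF W inj(2) disj(2)]
  have a: "\<pi> p \<in> Z (p + 1)" "\<pi> p \<notin> W (p + t)"
    using Z_mem[of "p + 1" p] W_mem[of "p + t" q] \<open>p < k\<close> q bounds \<open>p + d \<le> q\<close> \<open>t \<le> d\<close>
    by simp_all
  have b: "\<sigma> p \<in> W (p + 1)" "\<sigma> p \<notin> Z (p + s)"
    using W_mem[of "p + 1" p] Z_mem[of "p + s" r] \<open>p < k\<close> r bounds \<open>p + d \<le> r\<close> \<open>s \<le> d\<close>
    by simp_all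
  have "Z k - X = W k - X" using Z W img unfolding blue_chain_def by simp
  with top have "Z k = W k" by blast
  have "Z i \<in> {A \<in> Pow (X \<union> Y). c A}" "W i \<in> {A \<in> Pow (X \<union> Y). c A}" if "i \<le> k" for i
    using blue_chain_members[OF Z that] blue_chain_members[OF W that] img by auto
  then have S: "Z ` {..k} \<union> W ` {..k} \<subseteq> {A \<in> Pow (X \<union> Y). c A}" by auto
  show ?thesis
    by (rule has_copy_SD_of_chains[OF blue_chain_subset_iff[OF Z inj(1) disj(1)]
          blue_chain_subset_iff[OF W inj(2) disj(2)] bottom \<open>Z k = W k\<close> bounds a b S])
qed

lemma has_copy_SD_of_interleavings:
  assumes "s \<le> d" "t \<le> d" "d \<ge> 1"
    and g: "g \<in> (\<Pi>\<^sub>E r\<in>{..<d}. {p. p permutes {..<m}})"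
      "g' \<in> (\<Pi>\<^sub>E r\<in>{..<d}. {p. p permutes {..<m}})" "g \<noteq> g'"
    and Z: "blue_chain c {..<n} (interleave n d g) (Suc (d * m)) {..<n} Z"
    and W: "blue_chain c {..<n} (interleave n d g') (Suc (d * m)) {..<n} W"
    and "Z 0 = W 0" "Z (d * m) \<inter> {..<n} = W (d * m) \<inter> {..<n}"
  shows "has_copy (SD s t) SD_le {A \<in> Q (n + d * m). c A} (\<subseteq>)"
proof -
  have "{..<n} \<union> {n..<n + d * m} = {..<n + d * m}" by auto
  moreover have "has_copy (SD s t) SD_le {A \<in> Pow ({..<n} \<union> {n..<n + d * m}). c A} (\<subseteq>)"
  proof (rule has_copy_SD_of_blue_chains[OF assms(1,2) _ _ _ _ _ Z W assms(9,10)])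
    show "{..<n} \<inter> {n..<n + d * m} = {}" by auto
    show "bij_betw (interleave n d g) {..<d * m} {n..<n + d * m}"
      using g(1) \<open>d \<ge> 1\<close> by (intro bij_betw_interleave) auto
    show "bij_betw (interleave n d g') {..<d * m} {n..<n + d * m}"
      using g(2) \<open>d \<ge> 1\<close> by (intro bij_betw_interleave) auto
    show "i mod d = i' mod d" if "interleave n d g i = interleave n d g' i'" for i i'
      using that by (rule interleave_mod_eq)
    show "\<exists>i<d * m. interleave n d g i \<noteq> interleave n d g' i"
      using interleave_neq[OF g] .
  qed
  ultimately show ?thesis unfolding Q_def by simp
qed

lemma ramsey_arrow_SD_Q:
  assumes "s \<le> d" "t \<le> d" and many: "(4::nat) ^ n < fact m ^ d"
  shows "ramsey_arrow (n + d * m) (SD s t) SD_le (Q n) (\<subseteq>)"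
  unfolding ramsey_arrow_def
proof (intro allI disjCI)
  fix c :: "nat set \<Rightarrow> bool"
  assume no_red: "\<not> has_copy (Q n) (\<subseteq>) {X \<in> Q (n + d * m). \<not> c X} (\<subseteq>)"
  have "d \<ge> 1" using many by (cases d) auto
  define G where "G = (\<Pi>\<^sub>E r\<in>{..<d}. {g. g permutes {..<m}})"
  have "\<exists>Z. blue_chain c {..<n} (interleave n d g) (Suc (d * m)) {..<n} Z" if "g \<in> G" for g
  proof -
    have "bij_betw (interleave n d g) {..<d * m} {n..<n + d * m}"
      using that \<open>d \<ge> 1\<close> unfolding G_def by (intro bij_betw_interleave) auto
    then show ?thesis
      using blue_chain_exists[OF no_red] by (simp add: bij_betw_imp_surj_on)
  qed
  then obtain chain where chain:
    "\<And>g. g \<in> G \<Longrightarrow> blue_chain c {..<n} (interleave n d g) (Suc (d * m)) {..<n} (chain g)"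
    by metis
  define ends where "ends g = (chain g 0, chain g (d * m) \<inter> {..<n})" for g
  have "ends ` G \<subseteq> Pow {..<n} \<times> Pow {..<n}"
  proof (rule image_subsetI)
    fix g assume "g \<in> G"
    then have "chain g 0 - {..<n} = {}" using chain unfolding blue_chain_def by simp
    then show "ends g \<in> Pow {..<n} \<times> Pow {..<n}" unfolding ends_def by auto
  qed
  then have "card (ends ` G) \<le> card (Pow {..<n} \<times> Pow {..<n})" by (intro card_mono) auto
  also have "\<dots> < card G"
    using many by (simp add: G_def card_PiE card_permutations card_cartesian_product card_Pow
        flip: power_mult_distrib)
  finally have "\<not> inj_on ends G" by (rule pigeonhole)
  then obtain g g' where g: "g \<in> G" "g' \<in> G" "g \<noteq> g'" "ends g = ends g'"
    unfolding inj_on_def by blast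
  then have "g \<in> (\<Pi>\<^sub>E r\<in>{..<d}. {p. p permutes {..<m}})"
    "g' \<in> (\<Pi>\<^sub>E r\<in>{..<d}. {p. p permutes {..<m}})"
    unfolding G_def by simp_all
  then show "has_copy (SD s t) SD_le {X \<in> Q (n + d * m). c X} (\<subseteq>)"
    using has_copy_SD_of_interleavings[OF assms(1,2) \<open>d \<ge> 1\<close> _ _ \<open>g \<noteq> g'\<close> chain chain] g
    unfolding ends_def by simp
qed

lemma ln_fact_lower: "real M * (ln (real M) - 1) \<le> ln (fact M)"
proof (cases "M = 0")
  case False
  have exp_series: "(\<lambda>k. real M ^ k /\<^sub>R fact k) sums exp (real M)" by (rule exp_converges)
  have "(\<Sum>k\<in>{M}. real M ^ k /\<^sub>R fact k) \<le> (\<Sum>k. real M ^ k /\<^sub>R fact k)"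
    by (rule sum_le_suminf) (use exp_series sums_summable in auto)
  then have "real M ^ M / fact M \<le> exp (real M)"
    using sums_unique[OF exp_series] by (simp add: divide_inverse mult.commute)
  then have "real M ^ M \<le> exp (real M) * fact M" by (simp add: divide_le_eq)
  then have "ln (real M ^ M) \<le> ln (exp (real M) * fact M)"
    using False by (subst ln_le_cancel_iff) auto
  then show ?thesis by (simp add: ln_mult ln_realpow algebra_simps)
qed simp

definition block_length :: "nat \<Rightarrow> nat \<Rightarrow> nat" where
  "block_length d n = (LEAST m. (4::nat) ^ n < fact m ^ d)"

lemma fact_power_block_length_gt: "d \<ge> 1 \<Longrightarrow> (4::nat) ^ n < fact (block_length d n) ^ d"
  unfolding block_length_def
proof (rule LeastI)
  assume "d \<ge> 1"
  have "(4::nat) ^ n < 4 ^ n + 1" by simp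
  also have "\<dots> \<le> fact (4 ^ n + 1)" by (rule fact_ge_self)
  also have "\<dots> \<le> fact (4 ^ n + 1) ^ d"
    using \<open>d \<ge> 1\<close> by (intro self_le_power) (auto simp: Suc_le_eq)
  finally show "(4::nat) ^ n < fact (4 ^ n + 1) ^ d" .
qed

lemma poset_ramsey_SD_Q_le:
  assumes "d \<ge> 1" "s \<le> d" "t \<le> d"
  shows "poset_ramsey (SD s t) SD_le (Q n) (\<subseteq>) \<le> n + d * block_length d n"
  unfolding poset_ramsey_def
  by (rule Least_le, rule ramsey_arrow_SD_Q[OF assms(2,3) fact_power_block_length_gt[OF assms(1)]])

lemma block_length_le:
  assumes "real n * (2 * ln 2) < real d * (x * (ln x - 1))" "exp 1 \<le> x"
  shows "real (block_length d n) \<le> x + 1"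
proof -
  define M where "M = nat \<lceil>x\<rceil>"
  have "x > 0" using assms(2) by (meson exp_gt_zero order.strict_trans2)
  then have "x \<le> real M" "real M \<le> x + 1" unfolding M_def using ceiling_correct[of x] by linarith+
  have "1 \<le> ln x" using assms(2) \<open>x > 0\<close> by (metis ln_exp ln_le_cancel_iff exp_gt_zero)
  moreover have "ln x \<le> ln (real M)" using \<open>x > 0\<close> \<open>x \<le> real M\<close> by simp
  ultimately have "x * (ln x - 1) \<le> real M * (ln (real M) - 1)"
    using \<open>x > 0\<close> \<open>x \<le> real M\<close> by (intro mult_mono) auto
  also have "\<dots> \<le> ln (fact M)" by (rule ln_fact_lower)
  finally have "real d * (x * (ln x - 1)) \<le> real d * ln (fact M)" by (rule mult_left_mono) simp
  moreover have "ln (real (4 ^ n)) = real n * (2 * ln 2)"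
    using ln_realpow[of 2 2] by (simp add: ln_realpow)
  moreover have "ln (real (fact M ^ d)) = real d * ln (fact M)"
    by (simp add: ln_realpow)
  ultimately have "ln (real (4 ^ n)) < ln (real (fact M ^ d))" using assms(1) by linarith
  then have "real (4 ^ n) < real (fact M ^ d)" by (subst (asm) ln_less_cancel_iff) simp_all
  then have "(4::nat) ^ n < fact M ^ d" by (simp only: of_nat_less_iff)
  then have "block_length d n \<le> M" unfolding block_length_def by (rule Least_le)
  with \<open>real M \<le> x + 1\<close> show ?thesis by linarith
qed

text \<open>For x = K/d \<cdot> n / log n with K > 2 we have d \<cdot> x (ln x - 1) \<sim> (K/2) \<cdot> n ln 4, so
  block_length d n \<le> \<lceil>x\<rceil> eventually.\<close>

lemma block_length_asymptotics:
  assumes "d \<ge> 1" "\<epsilon> > 0"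
  shows "\<forall>\<^sub>F n in sequentially. real d * real (block_length d n) * log 2 (real n) / real n < 2 + \<epsilon>"
proof -
  define K where "K = 2 + \<epsilon> / 2"
  define x where "x n = K / real d * real n / log 2 (real n)" for n :: nat
  have "K > 0" "real d > 0" using assms unfolding K_def by auto
  then have "filterlim x at_top sequentially"
    unfolding x_def by real_asymp
  then have large: "\<forall>\<^sub>F n in sequentially. exp 1 \<le> x n"
    by (simp add: filterlim_at_top)
  have "((\<lambda>n. real d * (x n * (ln (x n) - 1)) / (real n * (2 * ln 2))) \<longlongrightarrow> K / 2) sequentially"
    unfolding x_def using \<open>K > 0\<close> \<open>real d > 0\<close> by real_asymp
  moreover have "1 < K / 2" using assms(2) unfolding K_def by simp
  ultimately have beats_4n: "\<forall>\<^sub>F n in sequentially.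
      1 < real d * (x n * (ln (x n) - 1)) / (real n * (2 * ln 2))"
    by (rule order_tendstoD(1))
  have "((\<lambda>n. real d * log 2 (real n) / real n) \<longlongrightarrow> 0) sequentially" by real_asymp
  moreover have "0 < \<epsilon> / 2" using assms(2) by simp
  ultimately have small: "\<forall>\<^sub>F n in sequentially. real d * log 2 (real n) / real n < \<epsilon> / 2"
    by (rule order_tendstoD(2))
  show ?thesis
    using large beats_4n small eventually_ge_at_top[of 2]
  proof eventually_elim
    case (elim n)
    have "real n \<ge> 2" using elim(4) by simp
    then have "log 2 (real n) > 0" by simp
    have "real n * (2 * ln 2) < real d * (x n * (ln (x n) - 1))"
      using elim(2) \<open>real n \<ge> 2\<close> by (simp add: less_divide_eq)
    then have "real (block_length d n) \<le> x n + 1" using elim(1) by (rule block_length_le)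
    then have "real d * real (block_length d n) * log 2 (real n) / real n
        \<le> real d * (x n + 1) * log 2 (real n) / real n"
      using \<open>log 2 (real n) > 0\<close> \<open>real n \<ge> 2\<close>
      by (intro divide_right_mono mult_right_mono mult_left_mono) auto
    also have "\<dots> = K + real d * log 2 (real n) / real n"
      unfolding x_def using \<open>log 2 (real n) > 0\<close> \<open>real n \<ge> 2\<close> \<open>real d > 0\<close>
      by (simp add: field_simps less_imp_neq[symmetric])
    also have "\<dots> < 2 + \<epsilon>" using elim(3) unfolding K_def by linarith
    finally show ?case .
  qed
qed

lemma tendsto_positive_part_zero:
  assumes "\<And>\<epsilon>. \<epsilon> > 0 \<Longrightarrow> \<forall>\<^sub>F n in F. f n < a + \<epsilon>"
  shows "((\<lambda>n. max 0 (f n - a)) \<longlongrightarrow> (0::real)) F"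
proof (rule order_tendstoI)
  fix \<epsilon> :: real assume "\<epsilon> > 0"
  show "\<forall>\<^sub>F n in F. max 0 (f n - a) < \<epsilon>"
    using assms[OF \<open>\<epsilon> > 0\<close>] by eventually_elim (use \<open>\<epsilon> > 0\<close> in simp)
qed (intro always_eventually allI, simp add: less_max_iff_disj)

theorem theorem3:
  fixes s t :: nat
  assumes "s \<ge> 1" and "t \<ge> 1"
  shows "\<exists>e :: nat \<Rightarrow> real. e \<longlonglongrightarrow> 0 \<and>
    (\<forall>\<^sub>F n in sequentially.
       real (poset_ramsey (SD s t) SD_le (Q n) (\<subseteq>))
         \<le> real n + (2 + e n) * real n / log 2 (real n))"
proof -
  define d where "d = max s t"
  have d: "d \<ge> 1" "s \<le> d" "t \<le> d" using assms unfolding d_def by auto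
  define ratio where "ratio n = real d * real (block_length d n) * log 2 (real n) / real n" for n
  have ramsey_le:
      "real (poset_ramsey (SD s t) SD_le (Q n) (\<subseteq>)) \<le> real n + real (d * block_length d n)" for n
    using poset_ramsey_SD_Q_le[OF d] by (metis of_nat_add of_nat_mono)
  show ?thesis
  proof (intro exI conjI)
    show "(\<lambda>n. max 0 (ratio n - 2)) \<longlonglongrightarrow> 0"
      using block_length_asymptotics[OF d(1)] unfolding ratio_def
      by (intro tendsto_positive_part_zero)
    show "\<forall>\<^sub>F n in sequentially. real (poset_ramsey (SD s t) SD_le (Q n) (\<subseteq>))
        \<le> real n + (2 + max 0 (ratio n - 2)) * real n / log 2 (real n)"
      using eventually_ge_at_top[of 2]
    proof eventually_elim
      case (elim n)
      then have "real n \<ge> 2" "log 2 (real n) > 0" by simp_all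
      then have "real (d * block_length d n) = ratio n * real n / log 2 (real n)"
        unfolding ratio_def by (simp add: field_simps less_imp_neq[symmetric])
      also have "\<dots> \<le> (2 + max 0 (ratio n - 2)) * real n / log 2 (real n)"
        using \<open>real n \<ge> 2\<close> \<open>log 2 (real n) > 0\<close> by (intro divide_right_mono mult_right_mono) auto
      finally show ?case using ramsey_le[of n] by linarith
    qed
  qed
qed

end
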